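(* Let \(X\) be a nonempty set and let \(\Phi\) be a mapping with domain \(X^{2}\). Then the following conditions are equivalent. (i) There is a totally ordered set \(Q\) such that \(\Phi\) is combinatorially similar to a \(Q\)-ultrametric. (ii) There is a poset \(Q\) such that \(\Phi\) is combinatorially similar to a \(Q\)-ultrametric. (iii) \(\Phi\) is symmetric, the transitive closure \(u_{\Phi}^{t}\) of \(u_{\Phi}\) is antisymmetric, there is \(a_0 \in \Phi(X^{2})\) with \(\Phi^{-1}(a_0) = \Delta_{X}:=\{\langle x,x\rangle:x\in X\}\), and for every triple \(\langle x_1, x_2, x_3\rangle\) of points of \(X\) there is a permutation \((i_1,i_2,i_3)\) of \((1,2,3)\) such that \(\Phi(x_{i_1}, x_{i_2}) = \Phi(x_{i_2}, x_{i_3})\). (iv) There is \(b_0 \in \Phi(X^{2})\) such that \(\Phi^{-1}(b_0) = \Delta_{X}\), the binary relation \(\preccurlyeq_{\Phi} := u_{\Phi}^{t} \cup \Delta_{\Phi(X^{2})}\) is a partial order on \(\Phi(X^{2})\), \(b_0\) is the smallest element of \((\Phi(X^{2}), \preccurlyeq_{\Phi})\), and \(\Phi\) is a \(\preccurlyeq_{\Phi}\)-ultrametric on \(X\).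
   Context: For a mapping \(F\) with domain \(A\), \(F(A)\) denotes its range; \(\Delta_S=\{\langle s,s\rangle: s\in S\}\). Let \((Q,\preccurlyeq_Q)\) be a poset with a smallest element \(q_0\) and \(Z\) a nonempty set. A mapping \(d\colon Z^2\to Q\) is a \(Q\)-pseudoultrametric (= \(\preccurlyeq_Q\)-pseudoultrametric) if \(d\) is symmetric, \(d(z,z)=q_0\) for all \(z\in Z\), and for every triple \(\langle z_1,z_2,z_3\rangle\) of points of \(Z\) there is a permutation \((i_1,i_2,i_3)\) of \((1,2,3)\) with \(d(z_{i_1},z_{i_3})\preccurlyeq_Q d(z_{i_1},z_{i_2})\) and \(d(z_{i_1},z_{i_2})=d(z_{i_2},z_{i_3})\); it is a \(Q\)-ultrametric (= \(\preccurlyeq_Q\)-ultrametric) if moreover \(d(x,y)=q_0\) iff \(x=y\). For nonempty sets \(X,Y\) and mappings \(\Phi\) with domain \(X^2\), \(\Psi\) with domain \(Y^2\), \(\Phi\) is combinatorially similar to \(\Psi\) if there are bijections \(f\colon \Phi(X^2)\to\Psi(Y^2)\) and \(g\colon Y\to X\) with \(\Psi(x,y)=f(\Phi(g(x),g(y)))\) for all \(x,y\in Y\). For \(\Phi\) with domain \(X^2\) and \(Y=\Phi(X^2)\), \(\langle y_1,y_2\rangle\in u_\Phi\) iff \(y_1,y_2\in Y\) and there are \(x_1,x_2,x_3\in X\) with \(y_1=\Phi(x_1,x_3)\) and \(y_2=\Phi(x_1,x_2)=\Phi(x_2,x_3)\). The transitive closure is \(\gamma^t=\bigcup_{n\ge1}\gamma^n\)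 with \(\gamma^{n+1}=\gamma^n\circ\gamma\), where \(\langle x,y\rangle\in\alpha\circ\beta\) iff there is \(z\) with \(\langle x,z\rangle\in\alpha\), \(\langle z,y\rangle\in\beta\). *)

theory Defs
  imports Main
begin

text \<open>Range of a mapping with domain X^2 (only values on X x X matter).\<close>
definition img2 :: "'a set \<Rightarrow> ('a \<Rightarrow> 'a \<Rightarrow> 'b) \<Rightarrow> 'b set" where
  "img2 X \<Phi> = (\<lambda>(x, y). \<Phi> x y) ` (X \<times> X)"

definition some_perm :: "('a \<Rightarrow> 'a \<Rightarrow> 'a \<Rightarrow> bool) \<Rightarrow> 'a \<Rightarrow> 'a \<Rightarrow> 'a \<Rightarrow> bool" where
  "some_perm P z1 z2 z3 \<longleftrightarrow>
     P z1 z2 z3 \<or> P z1 z3 z2 \<or> P z2 z1 z3 \<or> P z2 z3 z1 \<or> P z3 z1 z2 \<or> P z3 z2 z1"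

text \<open>Q-pseudoultrametric d on Z, where Q is ordered by le (a set of pairs) and q0 is the
  smallest element of Q.\<close>
definition is_pseudoultrametric ::
    "'c set \<Rightarrow> ('c \<times> 'c) set \<Rightarrow> 'c \<Rightarrow> 'd set \<Rightarrow> ('d \<Rightarrow> 'd \<Rightarrow> 'c) \<Rightarrow> bool" where
  "is_pseudoultrametric Q le q0 Z d \<longleftrightarrow>
     Z \<noteq> {} \<and>
     (\<forall>x\<in>Z. \<forall>y\<in>Z. d x y \<in> Q) \<and>
     (\<forall>x\<in>Z. \<forall>y\<in>Z. d x y = d y x) \<and>
     (\<forall>z\<in>Z. d z z = q0) \<and>
     (\<forall>z1\<in>Z. \<forall>z2\<in>Z. \<forall>z3\<in>Z.
        some_perm (\<lambda>a b c. (d a c, d a b) \<in> le \<and> d a b = d b c) z1 z2 z3)"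

definition is_ultrametric ::
    "'c set \<Rightarrow> ('c \<times> 'c) set \<Rightarrow> 'c \<Rightarrow> 'd set \<Rightarrow> ('d \<Rightarrow> 'd \<Rightarrow> 'c) \<Rightarrow> bool" where
  "is_ultrametric Q le q0 Z d \<longleftrightarrow>
     is_pseudoultrametric Q le q0 Z d \<and> (\<forall>x\<in>Z. \<forall>y\<in>Z. d x y = q0 \<longleftrightarrow> x = y)"

definition comb_similar ::
    "'a set \<Rightarrow> ('a \<Rightarrow> 'a \<Rightarrow> 'b) \<Rightarrow> 'd set \<Rightarrow> ('d \<Rightarrow> 'd \<Rightarrow> 'c) \<Rightarrow> bool" where
  "comb_similar X \<Phi> Y \<Psi> \<longleftrightarrow>
     (\<exists>f g. bij_betw f (img2 X \<Phi>) (img2 Y \<Psi>) \<and> bij_betw g Y X \<and>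
        (\<forall>x\<in>Y. \<forall>y\<in>Y. \<Psi> x y = f (\<Phi> (g x) (g y))))"

definition sim_to_Q_ultrametric ::
    "'a set \<Rightarrow> ('a \<Rightarrow> 'a \<Rightarrow> 'b) \<Rightarrow> 'c set \<Rightarrow> ('c \<times> 'c) set \<Rightarrow> 'c \<Rightarrow> 'd set
     \<Rightarrow> ('d \<Rightarrow> 'd \<Rightarrow> 'c) \<Rightarrow> bool" where
  "sim_to_Q_ultrametric X \<Phi> Q le q0 Y d \<longleftrightarrow>
     q0 \<in> Q \<and> (\<forall>q\<in>Q. (q0, q) \<in> le) \<and>
     is_ultrametric Q le q0 Y d \<and> comb_similar X \<Phi> Y d"

definition u_rel :: "'a set \<Rightarrow> ('a \<Rightarrow> 'a \<Rightarrow> 'b) \<Rightarrow> ('b \<times> 'b) set" where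
  "u_rel X \<Phi> = {(y1, y2). y1 \<in> img2 X \<Phi> \<and> y2 \<in> img2 X \<Phi> \<and>
     (\<exists>x1\<in>X. \<exists>x2\<in>X. \<exists>x3\<in>X. y1 = \<Phi> x1 x3 \<and> y2 = \<Phi> x1 x2 \<and> y2 = \<Phi> x2 x3)}"

definition preimage_is_diag :: "'a set \<Rightarrow> ('a \<Rightarrow> 'a \<Rightarrow> 'b) \<Rightarrow> 'b \<Rightarrow> bool" where
  "preimage_is_diag X \<Phi> a \<longleftrightarrow> {(x, y). x \<in> X \<and> y \<in> X \<and> \<Phi> x y = a} = Id_on X"

definition cond_iii :: "'a set \<Rightarrow> ('a \<Rightarrow> 'a \<Rightarrow> 'b) \<Rightarrow> bool" where
  "cond_iii X \<Phi> \<longleftrightarrow>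
     (\<forall>x\<in>X. \<forall>y\<in>X. \<Phi> x y = \<Phi> y x) \<and>
     antisym ((u_rel X \<Phi>)\<^sup>+) \<and>
     (\<exists>a0\<in>img2 X \<Phi>. preimage_is_diag X \<Phi> a0) \<and>
     (\<forall>x1\<in>X. \<forall>x2\<in>X. \<forall>x3\<in>X. some_perm (\<lambda>a b c. \<Phi> a b = \<Phi> b c) x1 x2 x3)"

definition le_Phi :: "'a set \<Rightarrow> ('a \<Rightarrow> 'a \<Rightarrow> 'b) \<Rightarrow> ('b \<times> 'b) set" where
  "le_Phi X \<Phi> = (u_rel X \<Phi>)\<^sup>+ \<union> Id_on (img2 X \<Phi>)"

definition cond_iv :: "'a set \<Rightarrow> ('a \<Rightarrow> 'a \<Rightarrow> 'b) \<Rightarrow> bool" where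
  "cond_iv X \<Phi> \<longleftrightarrow>
     (\<exists>b0\<in>img2 X \<Phi>. preimage_is_diag X \<Phi> b0 \<and>
        partial_order_on (img2 X \<Phi>) (le_Phi X \<Phi>) \<and>
        (\<forall>y\<in>img2 X \<Phi>. (b0, y) \<in> le_Phi X \<Phi>) \<and>
        is_ultrametric (img2 X \<Phi>) (le_Phi X \<Phi>) b0 X \<Phi>)"

end

theory Submission
  imports Defs
begin

(* Whether \<Phi> is combinatorially similar to a Q-ultrametric depends only on which pairs of
   points have equal distance. The order of Q is constrained only by the isosceles
   condition: the base of an isosceles triangle lies below its legs, i.e. u_\<Phi> must be
   contained in the order. So (ii) forces u_\<Phi>^t to be antisymmetric; conversely, if it is,
   u_\<Phi>^t together with the diagonal is a partial order for which \<Phi> itself is an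
   ultrametric, which is (iv), and a linear extension of it (Szpilrajn) gives (i). *)

lemma some_perm_mono:
  assumes "some_perm P x1 x2 x3"
    and "\<And>a b c. a \<in> {x1, x2, x3} \<Longrightarrow> b \<in> {x1, x2, x3} \<Longrightarrow> c \<in> {x1, x2, x3} \<Longrightarrow> P a b c \<Longrightarrow> R a b c"
  shows "some_perm R x1 x2 x3"
  using assms unfolding some_perm_def by blast

lemma some_perm_image:
  "some_perm P (h x1) (h x2) (h x3) \<longleftrightarrow> some_perm (\<lambda>a b c. P (h a) (h b) (h c)) x1 x2 x3"
  unfolding some_perm_def by (rule refl)

lemma partial_order_on_Union_chain:
  assumes "\<C> \<noteq> {}" "chain\<^sub>\<subseteq> \<C>" "\<forall>R\<in>\<C>. partial_order_on A R"
  shows "partial_order_on A (\<Union>\<C>)"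
  unfolding partial_order_on_def preorder_on_def
proof (intro conjI)
  show "\<Union>\<C> \<subseteq> A \<times> A" "refl_on A (\<Union>\<C>)"
    using assms(1,3) by (auto simp: partial_order_on_def preorder_on_def refl_on_def)
  show "trans (\<Union>\<C>)"
    using assms(2,3) by (intro chain_subset_trans_Union) (auto simp: partial_order_on_def preorder_on_def)
  show "antisym (\<Union>\<C>)"
    using assms(2,3) by (intro chain_subset_antisym_Union) (auto simp: partial_order_on_def)
qed

lemma partial_order_on_put_below:
  assumes M: "partial_order_on A M" and "(b, a) \<notin> M"
  shows "partial_order_on A (M \<union> {(x, y). (x, a) \<in> M \<and> (b, y) \<in> M})"
proof -
  have sub: "M \<subseteq> A \<times> A" and rf: "refl_on A M" and tr: "trans M" and as: "antisym M"
    using partial_order_onD[OF M] by auto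
  show ?thesis
    unfolding partial_order_on_def preorder_on_def
  proof (intro conjI)
    show "M \<union> {(x, y). (x, a) \<in> M \<and> (b, y) \<in> M} \<subseteq> A \<times> A"
      using sub by blast
    show "refl_on A (M \<union> {(x, y). (x, a) \<in> M \<and> (b, y) \<in> M})"
      using rf sub unfolding refl_on_def by blast
    show "trans (M \<union> {(x, y). (x, a) \<in> M \<and> (b, y) \<in> M})"
      using \<open>(b, a) \<notin> M\<close> unfolding trans_def by (blast dest: transD[OF tr])
    show "antisym (M \<union> {(x, y). (x, a) \<in> M \<and> (b, y) \<in> M})"
      using \<open>(b, a) \<notin> M\<close> unfolding antisym_def by (blast dest: transD[OF tr] antisymD[OF as])
  qed
qed

theorem linear_order_extension:
  assumes "partial_order_on A P"
  shows "\<exists>L. linear_order_on A L \<and> P \<subseteq> L"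
proof -
  define \<A> where "\<A> = {R. partial_order_on A R \<and> P \<subseteq> R}"
  have "\<exists>M\<in>\<A>. \<forall>R\<in>\<A>. M \<subseteq> R \<longrightarrow> R = M"
  proof (rule subset_Zorn_nonempty)
    show "\<A> \<noteq> {}"
      using assms by (auto simp: \<A>_def)
    show "\<Union>\<C> \<in> \<A>" if "\<C> \<noteq> {}" "subset.chain \<A> \<C>" for \<C>
      using that partial_order_on_Union_chain[of \<C> A]
      by (auto simp: \<A>_def subset_chain_def chain_subset_def)
  qed
  then obtain M where M: "partial_order_on A M" "P \<subseteq> M"
    and maximal: "\<And>R. partial_order_on A R \<Longrightarrow> M \<subseteq> R \<Longrightarrow> R = M"
    by (auto simp: \<A>_def)
  have "total_on A M"
  proof (rule total_onI, rule ccontr)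
    fix a b assume ab: "a \<in> A" "b \<in> A" and incomparable: "\<not> ((a, b) \<in> M \<or> (b, a) \<in> M)"
    let ?M' = "M \<union> {(x, y). (x, a) \<in> M \<and> (b, y) \<in> M}"
    have "refl_on A M"
      using partial_order_onD[OF M(1)] by blast
    then have "(a, b) \<in> ?M'"
      using ab by (auto simp: refl_on_def)
    moreover have "?M' = M"
      using partial_order_on_put_below[OF M(1)] incomparable by (intro maximal) auto
    ultimately show False
      using incomparable by blast
  qed
  then show ?thesis
    using M by (auto simp: linear_order_on_def)
qed

lemma img2I: "x \<in> X \<Longrightarrow> y \<in> X \<Longrightarrow> \<Phi> x y \<in> img2 X \<Phi>"
  unfolding img2_def by force

lemma img2E:
  assumes "p \<in> img2 X \<Phi>"
  obtains x y where "x \<in> X" "y \<in> X" "p = \<Phi> x y"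
  using assms unfolding img2_def by force

lemma u_relI:
  "x1 \<in> X \<Longrightarrow> x2 \<in> X \<Longrightarrow> x3 \<in> X \<Longrightarrow> \<Phi> x1 x2 = \<Phi> x2 x3 \<Longrightarrow> (\<Phi> x1 x3, \<Phi> x1 x2) \<in> u_rel X \<Phi>"
  unfolding u_rel_def by (auto intro: img2I) (metis)

lemma u_relE:
  assumes "(p, q) \<in> u_rel X \<Phi>"
  obtains x1 x2 x3 where "x1 \<in> X" "x2 \<in> X" "x3 \<in> X" "\<Phi> x1 x2 = \<Phi> x2 x3"
    "p = \<Phi> x1 x3" "q = \<Phi> x1 x2"
  using assms unfolding u_rel_def by auto

lemma u_rel_subset: "u_rel X \<Phi> \<subseteq> img2 X \<Phi> \<times> img2 X \<Phi>"
  unfolding u_rel_def by auto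

lemma preimage_is_diag_iff:
  "preimage_is_diag X \<Phi> a \<longleftrightarrow> (\<forall>x\<in>X. \<forall>y\<in>X. \<Phi> x y = a \<longleftrightarrow> x = y)"
  unfolding preimage_is_diag_def set_eq_iff by (auto simp: Id_on_iff)

lemma antisym_trancl_if_inj_into_order:
  assumes "r \<subseteq> A \<times> A" "inj_on k A" "r \<subseteq> inv_image s k" "trans s" "antisym s"
  shows "antisym (r\<^sup>+)"
proof (rule antisymI)
  fix p q assume pq: "(p, q) \<in> r\<^sup>+" "(q, p) \<in> r\<^sup>+"
  have "r\<^sup>+ \<subseteq> inv_image s k"
    using trancl_mono_subset[OF assms(3)] trancl_id[OF trans_inv_image[OF assms(4), of k]] by simp
  then have "k p = k q"
    using pq antisymD[OF assms(5)] by (meson in_inv_image subsetD)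
  moreover have "p \<in> A" "q \<in> A"
    using pq(1) trancl_subset_Sigma[OF assms(1)] by auto
  ultimately show "p = q"
    using assms(2) by (simp add: inj_on_eq_iff)
qed

lemma u_rel_subset_order:
  assumes "refl_on Q le" "is_pseudoultrametric Q le q0 Y d"
  shows "u_rel Y d \<subseteq> le"
proof
  fix pq assume "pq \<in> u_rel Y d"
  then obtain y1 y2 y3 where y: "y1 \<in> Y" "y2 \<in> Y" "y3 \<in> Y" and legs: "d y1 y2 = d y2 y3"
    and pq: "pq = (d y1 y3, d y1 y2)"
    by (metis prod.collapse u_relE)
  have sym: "\<forall>x\<in>Y. \<forall>y\<in>Y. d x y = d y x" and in_Q: "d y1 y3 \<in> Q"
    and "some_perm (\<lambda>a b c. (d a c, d a b) \<in> le \<and> d a b = d b c) y1 y2 y3"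
    using assms(2) y unfolding is_pseudoultrametric_def by auto
  \<comment> \<open>in every case but the intended one, all three sides are equal and reflexivity applies\<close>
  then show "pq \<in> le"
    unfolding some_perm_def pq
    using assms(1) sym y legs in_Q by (auto simp: refl_on_def)
qed

lemma cond_iii_if_ultrametric:
  assumes le: "partial_order_on Q le" and d: "is_ultrametric Q le q0 Y d"
  shows "cond_iii Y d"
proof -
  have pseudo: "is_pseudoultrametric Q le q0 Y d"
    and zero_iff: "\<forall>x\<in>Y. \<forall>y\<in>Y. d x y = q0 \<longleftrightarrow> x = y"
    using d unfolding is_ultrametric_def by auto
  then obtain y where "y \<in> Y" "d y y = q0"
    unfolding is_pseudoultrametric_def by auto
  then have "q0 \<in> img2 Y d"
    by (metis img2I)
  moreover have "(u_rel Y d)\<^sup>+ \<subseteq> le"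
    using trancl_mono_subset[OF u_rel_subset_order[OF _ pseudo]] partial_order_onD[OF le]
    by auto
  then have "antisym ((u_rel Y d)\<^sup>+)"
    using partial_order_onD(3)[OF le] antisym_subset by blast
  moreover have "some_perm (\<lambda>a b c. d a b = d b c) y1 y2 y3"
    if "y1 \<in> Y" "y2 \<in> Y" "y3 \<in> Y" for y1 y2 y3
    using pseudo that unfolding is_pseudoultrametric_def by (blast intro: some_perm_mono)
  ultimately show ?thesis
    using pseudo zero_iff unfolding cond_iii_def is_pseudoultrametric_def preimage_is_diag_iff
    by blast
qed

lemma comb_similarE:
  assumes "comb_similar X \<Phi> Y d"
  obtains f h where "inj_on f (img2 X \<Phi>)" "bij_betw h X Y"
    "\<And>a b. a \<in> X \<Longrightarrow> b \<in> X \<Longrightarrow> f (\<Phi> a b) = d (h a) (h b)"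
proof -
  from assms obtain f g where f: "bij_betw f (img2 X \<Phi>) (img2 Y d)" and g: "bij_betw g Y X"
    and d: "\<forall>x\<in>Y. \<forall>y\<in>Y. d x y = f (\<Phi> (g x) (g y))"
    unfolding comb_similar_def by blast
  let ?h = "inv_into Y g"
  have h: "bij_betw ?h X Y"
    using g by (rule bij_betw_inv_into)
  have "f (\<Phi> a b) = d (?h a) (?h b)" if "a \<in> X" "b \<in> X" for a b
    using d bij_betwE[OF h] that bij_betw_inv_into_right[OF g] by simp
  then show thesis
    using that f h bij_betw_imp_inj_on by blast
qed

lemma cond_iii_if_embedding:
  assumes d: "cond_iii Y d" and "X \<noteq> {}"
    and f: "inj_on f (img2 X \<Phi>)" and h: "h ` X \<subseteq> Y" "inj_on h X"
    and embed: "\<And>a b. a \<in> X \<Longrightarrow> b \<in> X \<Longrightarrow> f (\<Phi> a b) = d (h a) (h b)"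
  shows "cond_iii X \<Phi>"
proof -
  have hX: "h a \<in> Y" if "a \<in> X" for a
    using h(1) that by blast
  have \<Phi>_eq_iff: "\<Phi> a b = \<Phi> a' b' \<longleftrightarrow> d (h a) (h b) = d (h a') (h b')"
    if "a \<in> X" "b \<in> X" "a' \<in> X" "b' \<in> X" for a b a' b'
    using that inj_on_eq_iff[OF f] by (simp add: img2I flip: embed)
  obtain c0 where d_zero_iff: "\<forall>x\<in>Y. \<forall>y\<in>Y. d x y = c0 \<longleftrightarrow> x = y"
    using d unfolding cond_iii_def preimage_is_diag_iff by blast
  obtain x where x: "x \<in> X"
    using \<open>X \<noteq> {}\<close> by blast
  have "d (h x) (h x) = c0"
    using d_zero_iff hX[OF x] by blast
  then have "\<Phi> a b = \<Phi> x x \<longleftrightarrow> a = b" if "a \<in> X" "b \<in> X" for a b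
    using \<Phi>_eq_iff[OF that x x] d_zero_iff hX that inj_on_eq_iff[OF h(2)] by simp
  then have "\<exists>a0\<in>img2 X \<Phi>. preimage_is_diag X \<Phi> a0"
    using x img2I unfolding preimage_is_diag_iff by metis
  moreover have "antisym ((u_rel X \<Phi>)\<^sup>+)"
  proof (rule antisym_trancl_if_inj_into_order[OF u_rel_subset f])
    show "u_rel X \<Phi> \<subseteq> inv_image ((u_rel Y d)\<^sup>+) f"
    proof
      fix pq assume "pq \<in> u_rel X \<Phi>"
      then obtain x1 x2 x3 where "x1 \<in> X" "x2 \<in> X" "x3 \<in> X" "\<Phi> x1 x2 = \<Phi> x2 x3"
        and "pq = (\<Phi> x1 x3, \<Phi> x1 x2)"
        by (metis prod.collapse u_relE)
      then show "pq \<in> inv_image ((u_rel Y d)\<^sup>+) f"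
        using \<Phi>_eq_iff u_relI[of "h x1" Y "h x2" "h x3" d] hX by (simp add: embed)
    qed
    show "antisym ((u_rel Y d)\<^sup>+)"
      using d unfolding cond_iii_def by blast
  qed simp
  moreover have "some_perm (\<lambda>a b c. \<Phi> a b = \<Phi> b c) x1 x2 x3"
    if "x1 \<in> X" "x2 \<in> X" "x3 \<in> X" for x1 x2 x3
  proof -
    have "some_perm (\<lambda>a b c. d a b = d b c) (h x1) (h x2) (h x3)"
      using d hX that unfolding cond_iii_def by blast
    then show ?thesis
      unfolding some_perm_image
      by (rule some_perm_mono) (use that in \<open>auto simp: \<Phi>_eq_iff\<close>)
  qed
  moreover have "\<Phi> a b = \<Phi> b a" if "a \<in> X" "b \<in> X" for a b
    using d hX that unfolding cond_iii_def \<Phi>_eq_iff[OF that that(2,1)] by blast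
  ultimately show ?thesis
    unfolding cond_iii_def by blast
qed

lemma cond_iii_if_sim_to_Q_ultrametric:
  assumes "partial_order_on Q le" "sim_to_Q_ultrametric X \<Phi> Q le q0 Y d"
  shows "cond_iii X \<Phi>"
proof -
  have d: "is_ultrametric Q le q0 Y d" and sim: "comb_similar X \<Phi> Y d"
    using assms(2) unfolding sim_to_Q_ultrametric_def by auto
  from sim obtain f h where f: "inj_on f (img2 X \<Phi>)" and h: "bij_betw h X Y"
    and embed: "\<And>a b. a \<in> X \<Longrightarrow> b \<in> X \<Longrightarrow> f (\<Phi> a b) = d (h a) (h b)"
    by (rule comb_similarE) blast
  have "h ` X = Y" "Y \<noteq> {}"
    using h d unfolding bij_betw_def is_ultrametric_def is_pseudoultrametric_def by auto
  then have "X \<noteq> {}" "h ` X \<subseteq> Y"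
    by auto
  from cond_iii_if_embedding[OF cond_iii_if_ultrametric[OF assms(1) d] this(1) f this(2)
      bij_betw_imp_inj_on[OF h] embed]
  show ?thesis .
qed

lemma cond_iii_if_cond_iv: "cond_iv X \<Phi> \<Longrightarrow> cond_iii X \<Phi>"
  unfolding cond_iv_def by (blast intro: cond_iii_if_ultrametric)

lemma partial_order_on_trancl_Un_Id_on:
  assumes "r \<subseteq> A \<times> A" "antisym (r\<^sup>+)"
  shows "partial_order_on A (r\<^sup>+ \<union> Id_on A)"
  unfolding partial_order_on_def preorder_on_def
proof (intro conjI)
  show "r\<^sup>+ \<union> Id_on A \<subseteq> A \<times> A" "refl_on A (r\<^sup>+ \<union> Id_on A)"
    using trancl_subset_Sigma[OF assms(1)] by (auto simp: refl_on_def)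
  show "trans (r\<^sup>+ \<union> Id_on A)"
    unfolding trans_def by (blast intro: trancl_trans)
  show "antisym (r\<^sup>+ \<union> Id_on A)"
    using assms(2) unfolding antisym_def by auto
qed

lemma cond_iv_if_cond_iii:
  assumes "cond_iii X \<Phi>"
  shows "cond_iv X \<Phi>"
proof -
  have sym: "\<And>x y. x \<in> X \<Longrightarrow> y \<in> X \<Longrightarrow> \<Phi> x y = \<Phi> y x"
    and triangles: "\<And>x1 x2 x3. x1 \<in> X \<Longrightarrow> x2 \<in> X \<Longrightarrow> x3 \<in> X \<Longrightarrow>
      some_perm (\<lambda>a b c. \<Phi> a b = \<Phi> b c) x1 x2 x3"
    and antisym: "antisym ((u_rel X \<Phi>)\<^sup>+)"
    using assms unfolding cond_iii_def by auto
  obtain a0 where a0: "a0 \<in> img2 X \<Phi>" "preimage_is_diag X \<Phi> a0"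
    using assms unfolding cond_iii_def by blast
  then have zero_iff: "\<And>x y. x \<in> X \<Longrightarrow> y \<in> X \<Longrightarrow> \<Phi> x y = a0 \<longleftrightarrow> x = y"
    unfolding preimage_is_diag_iff by blast
  have u_le: "u_rel X \<Phi> \<subseteq> le_Phi X \<Phi>"
    unfolding le_Phi_def by auto
  have "partial_order_on (img2 X \<Phi>) (le_Phi X \<Phi>)"
    unfolding le_Phi_def using u_rel_subset antisym by (rule partial_order_on_trancl_Un_Id_on)
  moreover have "(a0, y) \<in> le_Phi X \<Phi>" if "y \<in> img2 X \<Phi>" for y
  proof -
    obtain x z where "x \<in> X" "z \<in> X" "y = \<Phi> x z"
      using \<open>y \<in> img2 X \<Phi>\<close> by (rule img2E)
    moreover from this have "(\<Phi> x x, \<Phi> x z) \<in> u_rel X \<Phi>"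
      using u_relI[of x X z x \<Phi>] sym by simp
    moreover have "\<Phi> x x = a0"
      using zero_iff \<open>x \<in> X\<close> by simp
    ultimately show ?thesis
      using u_le by auto
  qed
  moreover have "is_ultrametric (img2 X \<Phi>) (le_Phi X \<Phi>) a0 X \<Phi>"
  proof -
    have "X \<noteq> {}"
      using a0(1) by (auto elim: img2E)
    moreover have "some_perm (\<lambda>a b c. (\<Phi> a c, \<Phi> a b) \<in> le_Phi X \<Phi> \<and> \<Phi> a b = \<Phi> b c) x1 x2 x3"
      if x: "x1 \<in> X" "x2 \<in> X" "x3 \<in> X" for x1 x2 x3
      using triangles[OF x]
    proof (rule some_perm_mono)
      fix a b c assume "a \<in> {x1, x2, x3}" "b \<in> {x1, x2, x3}" "c \<in> {x1, x2, x3}" "\<Phi> a b = \<Phi> b c"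
      moreover from this have "a \<in> X" "b \<in> X" "c \<in> X"
        using x by blast+
      ultimately show "(\<Phi> a c, \<Phi> a b) \<in> le_Phi X \<Phi> \<and> \<Phi> a b = \<Phi> b c"
        using u_relI[of a X b c \<Phi>] u_le by blast
    qed
    ultimately show ?thesis
      unfolding is_ultrametric_def is_pseudoultrametric_def
      by (intro conjI ballI) (auto simp: img2I zero_iff intro: sym)
  qed
  ultimately show ?thesis
    unfolding cond_iv_def using a0 by blast
qed

lemma is_ultrametric_mono:
  assumes "le \<subseteq> le'" "is_ultrametric Q le q0 Y d"
  shows "is_ultrametric Q le' q0 Y d"
  using assms unfolding is_ultrametric_def is_pseudoultrametric_def
  by (blast intro: some_perm_mono)

lemma comb_similar_refl: "comb_similar X \<Phi> X \<Phi>"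
  unfolding comb_similar_def by (rule exI[of _ id], rule exI[of _ id]) simp

lemma linear_sim_to_Q_ultrametric_if_cond_iv:
  assumes "cond_iv X \<Phi>"
  shows "\<exists>(Q::'b set) le q0 (Y::'a set) d.
    linear_order_on Q le \<and> sim_to_Q_ultrametric X (\<Phi>::'a \<Rightarrow> 'a \<Rightarrow> 'b) Q le q0 Y d"
proof -
  obtain b0 where b0: "b0 \<in> img2 X \<Phi>" "\<forall>y\<in>img2 X \<Phi>. (b0, y) \<in> le_Phi X \<Phi>"
    and "partial_order_on (img2 X \<Phi>) (le_Phi X \<Phi>)"
    and ultra: "is_ultrametric (img2 X \<Phi>) (le_Phi X \<Phi>) b0 X \<Phi>"
    using assms unfolding cond_iv_def by blast
  then obtain L where L: "linear_order_on (img2 X \<Phi>) L" "le_Phi X \<Phi> \<subseteq> L"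
    using linear_order_extension by blast
  have "sim_to_Q_ultrametric X \<Phi> (img2 X \<Phi>) L b0 X \<Phi>"
    unfolding sim_to_Q_ultrametric_def
    using b0 L(2) is_ultrametric_mono[OF L(2) ultra] comb_similar_refl by blast
  then show ?thesis
    using L(1) by blast
qed

theorem corollary3p19:
  fixes X :: "'a set" and \<Phi> :: "'a \<Rightarrow> 'a \<Rightarrow> 'b"
  assumes "X \<noteq> {}"
  shows "((\<exists>(Q::'b set) le q0 (Y::'a set) d.
              linear_order_on Q le \<and> sim_to_Q_ultrametric X \<Phi> Q le q0 Y d)
          \<longleftrightarrow> (\<exists>(Q::'b set) le q0 (Y::'a set) d.
              partial_order_on Q le \<and> sim_to_Q_ultrametric X \<Phi> Q le q0 Y d))
       \<and> ((\<exists>(Q::'b set) le q0 (Y::'a set) d.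
              partial_order_on Q le \<and> sim_to_Q_ultrametric X \<Phi> Q le q0 Y d)
          \<longleftrightarrow> cond_iii X \<Phi>)
       \<and> (cond_iii X \<Phi> \<longleftrightarrow> cond_iv X \<Phi>)
       \<and> ((\<exists>(Q::'c set) le q0 (Y::'d set) d.
              partial_order_on Q le \<and> sim_to_Q_ultrametric X \<Phi> Q le q0 Y d)
          \<longrightarrow> cond_iii X \<Phi>)"
proof -
  let ?i = "\<exists>(Q::'b set) le q0 (Y::'a set) d.
    linear_order_on Q le \<and> sim_to_Q_ultrametric X \<Phi> Q le q0 Y d"
  let ?ii = "\<exists>(Q::'b set) le q0 (Y::'a set) d.
    partial_order_on Q le \<and> sim_to_Q_ultrametric X \<Phi> Q le q0 Y d"
  let ?ii' = "\<exists>(Q::'c set) le q0 (Y::'d set) d.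
    partial_order_on Q le \<and> sim_to_Q_ultrametric X \<Phi> Q le q0 Y d"
  have i_ii: "?i \<Longrightarrow> ?ii"
    unfolding linear_order_on_def by blast
  have ii_iii: "?ii \<Longrightarrow> cond_iii X \<Phi>" and ii'_iii: "?ii' \<Longrightarrow> cond_iii X \<Phi>"
    by (blast intro: cond_iii_if_sim_to_Q_ultrametric)+
  have iii_iv: "cond_iii X \<Phi> \<longleftrightarrow> cond_iv X \<Phi>"
    using cond_iv_if_cond_iii cond_iii_if_cond_iv by blast
  have iv_i: "cond_iv X \<Phi> \<Longrightarrow> ?i"
    by (rule linear_sim_to_Q_ultrametric_if_cond_iv)
  show ?thesis
    using i_ii ii_iii ii'_iii iii_iv iv_i by argo
qed

end
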